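(* Let $x$ be an allocation rule and suppose Assumptions D, X and T hold. Fix $i$ and $\theta$ with $0<X_i(\theta)<1$. Let $\bar t_i^w(\theta),\bar t_i^l(\theta)\in\mathbb{R}$ satisfy $\alpha\bar t_i^w(\theta)-\beta\bar t_i^l(\theta)\le K$ and $\theta-\bar t_i^w(\theta)<-\bar t_i^l(\theta)$, and let $\bar t_i(\theta,\cdot):=\bar t_i^w(\theta)x_i(\theta,\cdot)+\bar t_i^l(\theta)(1-x_i(\theta,\cdot))$. Then there exist $\widetilde t_i^w(\theta),\widetilde t_i^l(\theta)\in\mathbb{R}$ such that, with $\widetilde t_i(\theta,\cdot):=\widetilde t_i^w(\theta)x_i(\theta,\cdot)+\widetilde t_i^l(\theta)(1-x_i(\theta,\cdot))$: (i) $\widetilde T_i(\theta)\ge\bar T_i(\theta)$; (ii) $\widetilde U_i^{\min}(\theta)=\bar U_i^{\min}(\theta)$; (iii) $\alpha\widetilde t_i^w(\theta)-\beta\widetilde t_i^l(\theta)\le K$; (iv) $\theta-\widetilde t_i^w(\theta)=-\widetilde t_i^l(\theta)$. Here for an interim transfer $s(\cdot)$ (either $\bar t_i(\theta,\cdot)$ or $\widetilde t_i(\theta,\cdot)$) the interim revenue is $\int_\Theta s(\theta')dP(\theta')$ and the interim worst-case utility is $\inf_Q\{\int_\Theta[\theta x_i(\theta,\theta')-s(\theta')]dQ(\theta'):D(Q\|P)\le\eta\}$.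
   Context: $\Theta=[\underline\theta,\bar\theta]$ with $0<\underline\theta<\bar\theta$, Borel $\sigma$-algebra $\mathcal{B}$; "$\sigma$-algebra" means sub-$\sigma$-algebra of $\mathcal{B}$; $\Delta(\Theta,\mathcal{A})$ is the set of probability measures on $(\Theta,\mathcal{A})$; $P_{\mathcal{E}}$ is restriction. A divergence $D$ assigns to each pair $Q,P$ of probability measures on a common $\sigma$-algebra a value in $[0,\infty]$. Assumption D: for every $\sigma$-algebra $\mathcal{A}$, $P,Q\in\Delta(\Theta,\mathcal{A})$: (D1) $D(Q\|P)=0$ if $Q=P$; (D2) if $Q\ll P$ with bounded $dQ/dP$, $\epsilon\mapsto D(\epsilon Q+(1-\epsilon)P\|P)$ is continuous on $[0,1]$; (D3) $D(Q\|P)<\infty\Rightarrow Q\ll P$; (D4) $D(Q_{\mathcal{E}}\|P_{\mathcal{E}})\le D(Q\|P)$ for sub-$\sigma$-algebras $\mathcal{E}\subset\mathcal{A}$; (D5) equality in (D4) when $dQ_{\mathcal{E}}/dP_{\mathcal{E}}=dQ/dP$ $P$-a.e. Fix atomless $P\in\Delta(\Theta,\mathcal{B})$ and $\eta>0$; $Q$ ranges over $\Delta(\Theta,\mathcal{B})$. Two bidders $i\in\{1,2\}$; an allocation rule is bounded measurable $x=(x_1,x_2):\Theta^2\to\mathbb{R}^2$ with $x_1(\theta,\theta')\ge0$, $x_2(\theta',\theta)\ge0$, $x_1(\theta,\theta')+x_2(\theta',\theta)\le1$. $X_i(\theta)=\int x_i(\theta,\theta')dP(\theta')$, $X_i^{\min}(\theta)=\inf_Q\{\int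 x_i(\theta,\theta')dQ(\theta'):D(Q\|P)\le\eta\}$. Assumption X: (i) $x_i(\theta,\theta')\in\{0,1\}$ for $\theta'\ne\theta$; (ii) $X_i(\theta)=1\Rightarrow\theta=\bar\theta$; (iii) $X_i^{\min}$ non-decreasing. Assumption T: constants $0\le\alpha\le\beta\le1$ and $K\ge0$ are given (they define the class of transfer rules $t$ with $\alpha t_i(\theta,\theta^w)-\beta t_i(\theta,\theta^l)\le K$ whenever $\theta<\bar\theta$, $x_i(\theta,\theta^w)=1$, $x_i(\theta,\theta^l)=0$). *)

theory Defs
  imports "HOL-Probability.Probability"
begin

definition borelT :: "real set \<Rightarrow> real measure" where
  "borelT S = restrict_space borel S"

definition sub_sigma :: "real set \<Rightarrow> real set set \<Rightarrow> bool" where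
  "sub_sigma S A \<longleftrightarrow> sigma_algebra S A \<and> A \<subseteq> sets (borelT S)"

definition prob_on :: "real set \<Rightarrow> real set set \<Rightarrow> real measure \<Rightarrow> bool" where
  "prob_on S A Q \<longleftrightarrow> prob_space Q \<and> space Q = S \<and> sets Q = A"

definition restr :: "real measure \<Rightarrow> real set set \<Rightarrow> real measure" where
  "restr P E = measure_of (space P) E (emeasure P)"

definition mix :: "real \<Rightarrow> real measure \<Rightarrow> real measure \<Rightarrow> real measure" where
  "mix e Q P = measure_of (space P) (sets P)
      (\<lambda>B. ennreal e * emeasure Q B + ennreal (1 - e) * emeasure P B)"

definition assumption_D :: "real set \<Rightarrow> (real measure \<Rightarrow> real measure \<Rightarrow> ennreal) \<Rightarrow> bool" where
  "assumption_D S D \<longleftrightarrow>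
     (\<forall>A P Q. sub_sigma S A \<and> prob_on S A P \<and> prob_on S A Q \<longrightarrow>
        (Q = P \<longrightarrow> D Q P = 0)
      \<and> (absolutely_continuous P Q \<and> (\<exists>C::real. AE t in P. RN_deriv P Q t \<le> ennreal C)
           \<longrightarrow> continuous_on {0..1} (\<lambda>e. D (mix e Q P) P))
      \<and> (D Q P < \<infinity> \<longrightarrow> absolutely_continuous P Q)
      \<and> (\<forall>E. sub_sigma S E \<and> E \<subseteq> A \<longrightarrow>
            D (restr Q E) (restr P E) \<le> D Q P
          \<and> (absolutely_continuous P Q \<and>
             (AE t in P. RN_deriv (restr P E) (restr Q E) t = RN_deriv P Q t)
              \<longrightarrow> D (restr Q E) (restr P E) = D Q P)))"

definition atomless :: "real measure \<Rightarrow> bool" where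
  "atomless P \<longleftrightarrow> (\<forall>A\<in>sets P. 0 < measure P A \<longrightarrow>
      (\<exists>B\<in>sets P. B \<subseteq> A \<and> 0 < measure P B \<and> measure P B < measure P A))"

text \<open>Allocation rule x i t t' (bidder i in {1,2}, own type t, opponent type t').\<close>
definition allocation_rule :: "real set \<Rightarrow> (nat \<Rightarrow> real \<Rightarrow> real \<Rightarrow> real) \<Rightarrow> bool" where
  "allocation_rule S x \<longleftrightarrow>
     (\<forall>i\<in>{1,2}. (\<lambda>p. x i (fst p) (snd p)) \<in> borel_measurable (borelT S \<Otimes>\<^sub>M borelT S)
        \<and> (\<exists>B. \<forall>t\<in>S. \<forall>t'\<in>S. \<bar>x i t t'\<bar> \<le> B))
   \<and> (\<forall>t\<in>S. \<forall>t'\<in>S. x 1 t t' \<ge> 0 \<and> x 2 t' t \<ge> 0 \<and> x 1 t t' + x 2 t' t \<le> 1)"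

definition Qset :: "real set \<Rightarrow> (real measure \<Rightarrow> real measure \<Rightarrow> ennreal) \<Rightarrow> real measure
    \<Rightarrow> real \<Rightarrow> real measure set" where
  "Qset S D P \<eta> = {Q. prob_on S (sets (borelT S)) Q \<and> D Q P \<le> ennreal \<eta>}"

definition Xint :: "real measure \<Rightarrow> (nat \<Rightarrow> real \<Rightarrow> real \<Rightarrow> real) \<Rightarrow> nat \<Rightarrow> real \<Rightarrow> real" where
  "Xint P x i t = (\<integral>t'. x i t t' \<partial>P)"

definition Xmin :: "real set \<Rightarrow> (real measure \<Rightarrow> real measure \<Rightarrow> ennreal) \<Rightarrow> real measure
    \<Rightarrow> real \<Rightarrow> (nat \<Rightarrow> real \<Rightarrow> real \<Rightarrow> real) \<Rightarrow> nat \<Rightarrow> real \<Rightarrow> real" where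
  "Xmin S D P \<eta> x i t = (INF Q\<in>Qset S D P \<eta>. \<integral>t'. x i t t' \<partial>Q)"

definition assumption_X :: "real set \<Rightarrow> real \<Rightarrow> (real measure \<Rightarrow> real measure \<Rightarrow> ennreal)
    \<Rightarrow> real measure \<Rightarrow> real \<Rightarrow> (nat \<Rightarrow> real \<Rightarrow> real \<Rightarrow> real) \<Rightarrow> bool" where
  "assumption_X S hi D P \<eta> x \<longleftrightarrow>
     (\<forall>i\<in>{1,2}.
        (\<forall>t\<in>S. \<forall>t'\<in>S. t' \<noteq> t \<longrightarrow> x i t t' \<in> {0, 1})
      \<and> (\<forall>t\<in>S. Xint P x i t = 1 \<longrightarrow> t = hi)
      \<and> mono_on S (Xmin S D P \<eta> x i))"

definition revenue :: "real measure \<Rightarrow> (real \<Rightarrow> real) \<Rightarrow> real" where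
  "revenue P s = (\<integral>t'. s t' \<partial>P)"

definition Umin :: "real set \<Rightarrow> (real measure \<Rightarrow> real measure \<Rightarrow> ennreal) \<Rightarrow> real measure
    \<Rightarrow> real \<Rightarrow> (nat \<Rightarrow> real \<Rightarrow> real \<Rightarrow> real) \<Rightarrow> nat \<Rightarrow> real \<Rightarrow> (real \<Rightarrow> real) \<Rightarrow> real" where
  "Umin S D P \<eta> x i t s = (INF Q\<in>Qset S D P \<eta>. \<integral>t'. (t * x i t t' - s t') \<partial>Q)"

end

theory Submission
  imports Defs
begin

text \<open>Replace the transfers by the flat scheme \<open>tl' = -u\<close>, \<open>tw' = \<theta> - u\<close>, where \<open>u\<close> is the
  worst-case utility of the given scheme. Under the flat scheme the bidder's ex post utility
  is the constant \<open>u\<close> whatever the opponent's type, so its worst-case utility is again \<open>u\<close>.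
  The worst case is at most the expected utility under \<open>P\<close> itself (which is admissible
  since \<open>D(P\<parallel>P) = 0\<close>), so the flat scheme leaves the bidder no more expected surplus and
  therefore raises at least as much revenue. Finally, because \<open>tw - tl > \<theta>\<close>, flattening
  lowers \<open>\<alpha> tw - \<beta> tl\<close>, so the constraint of Assumption T is preserved.\<close>

lemma space_borelT [simp]: "space (borelT S) = S"
  by (simp add: borelT_def space_restrict_space)

lemma sub_sigma_borelT: "sub_sigma S (sets (borelT S))"
  unfolding sub_sigma_def using sets.sigma_algebra_axioms[of "borelT S"] by simp

lemma reference_in_Qset:
  assumes "assumption_D S D" "prob_on S (sets (borelT S)) P" "0 \<le> \<eta>"
  shows "P \<in> Qset S D P \<eta>"
proof -
  have "D P P = 0"
    using assms(1,2) sub_sigma_borelT unfolding assumption_D_def by blast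
  then show ?thesis
    using assms(2,3) by (simp add: Qset_def)
qed

lemma Qset_prob_space: "Q \<in> Qset S D P \<eta> \<Longrightarrow> prob_space Q"
  by (simp add: Qset_def prob_on_def)

lemma Qset_borel_measurable:
  assumes "Q \<in> Qset S D P \<eta>" "f \<in> borel_measurable (borelT S)"
  shows "f \<in> borel_measurable Q"
proof -
  have "sets Q = sets (borelT S)"
    using assms(1) by (simp add: Qset_def prob_on_def)
  then show ?thesis
    using assms(2) measurable_cong_sets by blast
qed

lemma Qset_integrable_bounded:
  fixes f :: "real \<Rightarrow> real"
  assumes "Q \<in> Qset S D P \<eta>" "f \<in> borel_measurable (borelT S)" "\<forall>t\<in>S. \<bar>f t\<bar> \<le> C"
  shows "integrable Q f" and "- C \<le> (\<integral>t. f t \<partial>Q)"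
proof -
  interpret prob_space Q
    using assms(1) by (rule Qset_prob_space)
  have space: "space Q = S"
    using assms(1) by (simp add: Qset_def prob_on_def)
  show int: "integrable Q f"
    using assms(3) Qset_borel_measurable[OF assms(1,2)] space
    by (intro integrable_const_bound[where B = C]) auto
  show "- C \<le> (\<integral>t. f t \<partial>Q)"
    using assms(3) space by (intro integral_ge_const int AE_I2) (auto simp: abs_le_iff)
qed

lemma integral_affine:
  fixes g :: "real \<Rightarrow> real"
  assumes "prob_space Q" "integrable Q g"
  shows "(\<integral>t. a + b * g t \<partial>Q) = a + b * (\<integral>t. g t \<partial>Q)"
proof -
  interpret prob_space Q by fact
  show ?thesis
    using assms(2) by (simp add: integral_add prob_space)
qed

lemma allocation_rule_section:
  assumes "allocation_rule S x" "i \<in> {1, 2}" "t \<in> S"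
  obtains B where "x i t \<in> borel_measurable (borelT S)" "\<forall>t'\<in>S. \<bar>x i t t'\<bar> \<le> B"
proof -
  obtain B where B: "\<forall>t\<in>S. \<forall>t'\<in>S. \<bar>x i t t'\<bar> \<le> B"
    and joint: "(\<lambda>p. x i (fst p) (snd p)) \<in> borel_measurable (borelT S \<Otimes>\<^sub>M borelT S)"
    using assms(1,2) unfolding allocation_rule_def by blast
  have "x i t \<in> borel_measurable (borelT S)"
    using measurable_Pair2[OF joint, of t] assms(3) by simp
  then show ?thesis
    using B assms(3) that by blast
qed

lemma Umin_le_integral:
  assumes "Q \<in> Qset S D P \<eta>"
    and "(\<lambda>t'. t * x i t t' - s t') \<in> borel_measurable (borelT S)"
    and "\<forall>t'\<in>S. \<bar>t * x i t t' - s t'\<bar> \<le> C"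
  shows "Umin S D P \<eta> x i t s \<le> (\<integral>t'. t * x i t t' - s t' \<partial>Q)"
  unfolding Umin_def
proof (rule cINF_lower[OF _ assms(1)])
  show "bdd_below ((\<lambda>Q. \<integral>t'. t * x i t t' - s t' \<partial>Q) ` Qset S D P \<eta>)"
    using Qset_integrable_bounded(2)[OF _ assms(2,3)] by (intro bdd_belowI2) blast
qed

lemma Umin_flat_utility:
  assumes "Qset S D P \<eta> \<noteq> {}"
  shows "Umin S D P \<eta> x i t (\<lambda>t'. t * x i t t' - u) = u"
proof -
  have "Umin S D P \<eta> x i t (\<lambda>t'. t * x i t t' - u) = (INF Q\<in>Qset S D P \<eta>. u)"
    unfolding Umin_def
    by (intro INF_cong refl) (simp add: prob_space.prob_space[OF Qset_prob_space])
  also have "\<dots> = u"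
    using assms by (rule cINF_const)
  finally show ?thesis .
qed

lemma revenue_two_part:
  assumes "prob_space P" "integrable P (x i t)"
  shows "revenue P (\<lambda>t'. w * x i t t' + l * (1 - x i t t')) = l + (w - l) * Xint P x i t"
proof -
  have "(\<lambda>t'. w * x i t t' + l * (1 - x i t t')) = (\<lambda>t'. l + (w - l) * x i t t')"
    by (simp add: algebra_simps)
  then show ?thesis
    using integral_affine[OF assms] by (simp add: revenue_def Xint_def)
qed

lemma Umin_two_part_le:
  assumes "P \<in> Qset S D P \<eta>"
    and "x i t \<in> borel_measurable (borelT S)" "\<forall>t'\<in>S. \<bar>x i t t'\<bar> \<le> B"
  shows "Umin S D P \<eta> x i t (\<lambda>t'. w * x i t t' + l * (1 - x i t t'))
    \<le> - l + (t - w + l) * Xint P x i t"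
proof -
  have utility: "t * x i t t' - (w * x i t t' + l * (1 - x i t t')) = - l + (t - w + l) * x i t t'"
    for t'
    by (simp add: algebra_simps)
  have "\<forall>t'\<in>S. \<bar>- l + (t - w + l) * x i t t'\<bar> \<le> \<bar>l\<bar> + \<bar>t - w + l\<bar> * B"
    using assms(3) by (auto simp: abs_mult intro!: abs_triangle_ineq4[THEN order_trans] mult_left_mono)
  then have "Umin S D P \<eta> x i t (\<lambda>t'. w * x i t t' + l * (1 - x i t t'))
      \<le> (\<integral>t'. t * x i t t' - (w * x i t t' + l * (1 - x i t t')) \<partial>P)"
    using assms(2) by (intro Umin_le_integral[OF assms(1)]) (simp_all only: utility, measurable)
  also have "\<dots> = - l + (t - w + l) * Xint P x i t"
    unfolding utility Xint_def
    by (rule integral_affine[OF Qset_prob_space[OF assms(1)] Qset_integrable_bounded(1)[OF assms]])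
  finally show ?thesis .
qed

lemma flat_transfers_preserve_constraint:
  fixes u X \<theta> tw tl \<alpha> \<beta> :: real
  assumes "u \<le> - tl + (\<theta> - tw + tl) * X" "0 \<le> X" "0 \<le> \<alpha>" "\<alpha> \<le> \<beta>" "\<theta> - tw < - tl"
  shows "\<alpha> * (\<theta> - u) - \<beta> * (- u) \<le> \<alpha> * tw - \<beta> * tl"
proof -
  have "\<alpha> * (\<theta> - u) - \<beta> * (- u) = \<alpha> * \<theta> + (\<beta> - \<alpha>) * u"
    by (simp add: algebra_simps)
  also have "\<dots> \<le> \<alpha> * \<theta> + (\<beta> - \<alpha>) * (- tl + (\<theta> - tw + tl) * X)"
    using assms(1,4) by (simp add: mult_left_mono)
  also have "\<dots> = \<alpha> * tw - \<beta> * tl + (\<theta> - tw + tl) * (\<alpha> + (\<beta> - \<alpha>) * X)"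
    by (simp add: algebra_simps)
  also have "\<dots> \<le> \<alpha> * tw - \<beta> * tl"
    using assms(2-5) by (simp add: mult_nonpos_nonneg)
  finally show ?thesis .
qed

theorem lemma3:
  fixes lo hi \<eta> \<alpha> \<beta> K \<theta> tw tl :: real
    and D :: "real measure \<Rightarrow> real measure \<Rightarrow> ennreal"
    and P :: "real measure"
    and x :: "nat \<Rightarrow> real \<Rightarrow> real \<Rightarrow> real"
    and i :: nat
  assumes Theta: "0 < lo" "lo < hi"
    and D: "assumption_D {lo..hi} D"
    and P: "prob_on {lo..hi} (sets (borelT {lo..hi})) P" "atomless P"
    and eta: "\<eta> > 0"
    and alloc: "allocation_rule {lo..hi} x"
    and X: "assumption_X {lo..hi} hi D P \<eta> x"
    and T: "0 \<le> \<alpha>" "\<alpha> \<le> \<beta>" "\<beta> \<le> 1" "0 \<le> K"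
    and i: "i \<in> {1, 2}"
    and \<theta>: "\<theta> \<in> {lo..hi}" "0 < Xint P x i \<theta>" "Xint P x i \<theta> < 1"
    and tbar: "\<alpha> * tw - \<beta> * tl \<le> K" "\<theta> - tw < - tl"
  shows "\<exists>tw' tl' :: real.
     revenue P (\<lambda>t'. tw' * x i \<theta> t' + tl' * (1 - x i \<theta> t'))
       \<ge> revenue P (\<lambda>t'. tw * x i \<theta> t' + tl * (1 - x i \<theta> t'))
   \<and> Umin {lo..hi} D P \<eta> x i \<theta> (\<lambda>t'. tw' * x i \<theta> t' + tl' * (1 - x i \<theta> t'))
       = Umin {lo..hi} D P \<eta> x i \<theta> (\<lambda>t'. tw * x i \<theta> t' + tl * (1 - x i \<theta> t'))
   \<and> \<alpha> * tw' - \<beta> * tl' \<le> K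
   \<and> \<theta> - tw' = - tl'"
proof -
  define u where "u = Umin {lo..hi} D P \<eta> x i \<theta> (\<lambda>t'. tw * x i \<theta> t' + tl * (1 - x i \<theta> t'))"
  obtain B where meas: "x i \<theta> \<in> borel_measurable (borelT {lo..hi})"
    and bound: "\<forall>t'\<in>{lo..hi}. \<bar>x i \<theta> t'\<bar> \<le> B"
    using allocation_rule_section[OF alloc i \<theta>(1)] by blast
  have PQ: "P \<in> Qset {lo..hi} D P \<eta>"
    using reference_in_Qset[OF D P(1)] eta by simp
  note revenue = revenue_two_part[of P x i \<theta>, OF Qset_prob_space[OF PQ]
    Qset_integrable_bounded(1)[OF PQ meas bound]]
  have u_le: "u \<le> - tl + (\<theta> - tw + tl) * Xint P x i \<theta>"
    unfolding u_def by (rule Umin_two_part_le[where x = x and i = i and t = \<theta>, OF PQ meas bound])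
  have flat: "(\<lambda>t'. (\<theta> - u) * x i \<theta> t' + (- u) * (1 - x i \<theta> t')) = (\<lambda>t'. \<theta> * x i \<theta> t' - u)"
    by (simp add: algebra_simps)
  show ?thesis
    unfolding u_def[symmetric]
  proof (intro exI conjI)
    show "revenue P (\<lambda>t'. (\<theta> - u) * x i \<theta> t' + (- u) * (1 - x i \<theta> t'))
      \<ge> revenue P (\<lambda>t'. tw * x i \<theta> t' + tl * (1 - x i \<theta> t'))"
      using u_le unfolding revenue by (simp add: algebra_simps)
    show "Umin {lo..hi} D P \<eta> x i \<theta> (\<lambda>t'. (\<theta> - u) * x i \<theta> t' + (- u) * (1 - x i \<theta> t')) = u"
      unfolding flat using PQ by (intro Umin_flat_utility) blast
    show "\<alpha> * (\<theta> - u) - \<beta> * (- u) \<le> K"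
      using flat_transfers_preserve_constraint[OF u_le _ T(1,2) tbar(2)] \<theta>(2) tbar(1) by simp
  qed simp
qed

end
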